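(* Let $\mu$ be a probability measure supported on a symmetric convex domain $\Omega\subset\mathbb R^n$ with $\int_\Omega|x|\,d\mu(x)<+\infty$, and let $h$ be a positive Borel function on $\Omega$ with $b^{-1}\le h\le b$ for some $b>1$ and $\int_\Omega h\,d\mu=1$. Let $d\nu=h\,d\mu$. If $\mu$ satisfies the dilation inequality for $\mathcal K_s^n(\Omega)$ with constant $\kappa>0$, then $\nu$ satisfies the dilation inequality for $\mathcal K_s^n(\Omega)$ with constant $b^{-2}\kappa$.
   Context: Symmetric set: $K=-K$. Symmetric convex domain: nonempty open convex $\Omega=-\Omega\subset\mathbb R^n$. $\mathcal K_s^n(\Omega)$: nonempty symmetric open convex subsets of $\Omega$. For Borel $A\subset\mathbb R^n$, $\varepsilon\in(0,1)$: $A_\varepsilon:=A\cup\{x:\exists y,\ \int_0^1\mathbf 1_A((1-t)x+ty)\,dt>1-\varepsilon\}$; for a probability measure $\mu$, $\mu^*(A):=\liminf_{\varepsilon\downarrow0}(\mu(A_\varepsilon)-\mu(A))/\varepsilon$. $\mu$ satisfies the dilation inequality for $\mathcal K_s^n(\Omega)$ with $\kappa>0$ if $\mu^*(K)\ge-\kappa(1-\mu(K))\log(1-\mu(K))$ for all $K\in\mathcal K_s^n(\Omega)$. *)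

theory Defs
  imports "HOL-Analysis.Analysis" "HOL-Probability.Probability"
begin

definition dil_set :: "'a::euclidean_space set \<Rightarrow> real \<Rightarrow> 'a set" where
  "dil_set A \<epsilon> = A \<union> {x. \<exists>y. (LBINT t:{0..1}. indicator A ((1 - t) *\<^sub>R x + t *\<^sub>R y)) > 1 - \<epsilon>}"

definition dil_lower :: "'a::euclidean_space measure \<Rightarrow> 'a set \<Rightarrow> ereal" where
  "dil_lower \<mu> A = Liminf (at_right 0)
      (\<lambda>\<epsilon>. ereal ((measure \<mu> (dil_set A \<epsilon>) - measure \<mu> A) / \<epsilon>))"

definition sym_convex_sets :: "'a::euclidean_space set \<Rightarrow> 'a set set" where
  "sym_convex_sets \<Omega> = {K. K \<noteq> {} \<and> open K \<and> convex K \<and> uminus ` K = K \<and> K \<subseteq> \<Omega>}"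

definition dilation_ineq :: "'a::euclidean_space measure \<Rightarrow> 'a set \<Rightarrow> real \<Rightarrow> bool" where
  "dilation_ineq \<mu> \<Omega> \<kappa> \<longleftrightarrow>
     (\<forall>K \<in> sym_convex_sets \<Omega>.
        ereal (- \<kappa> * (1 - measure \<mu> K) * ln (1 - measure \<mu> K)) \<le> dil_lower \<mu> K)"

end

theory Submission
  imports Defs
begin

text \<open>Since \<open>1/b \<le> h \<le> b\<close>, the measures \<open>\<mu>\<close> and \<open>\<nu> = h\<mu>\<close> agree up to the factor \<open>b\<close> on every
  Borel set, in particular on the increments \<open>K\<^sub>\<epsilon> - K\<close>, so \<open>\<nu>\<^sup>*(K) \<ge> \<mu>\<^sup>*(K) / b\<close>. The profile
  \<open>I(s) = -(1 - s) log (1 - s)\<close> satisfies \<open>I(r) \<le> b I(s)\<close> whenever \<open>r \<le> b s\<close> and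
  \<open>1 - r \<le> b (1 - s)\<close>, because \<open>I(s)/s\<close> decreases and \<open>I(s)/(1 - s) = -log (1 - s)\<close> increases.
  Applied to \<open>s = \<mu>(K)\<close>, \<open>r = \<nu>(K)\<close> this gives \<open>\<nu>\<^sup>*(K) \<ge> \<kappa> I(s) / b \<ge> \<kappa> I(r) / b\<^sup>2\<close>.\<close>

definition dil_profile :: "real \<Rightarrow> real" where
  "dil_profile s = - (1 - s) * ln (1 - s)"

lemma dil_profile_nonneg:
  assumes "0 \<le> s" "s \<le> 1"
  shows "0 \<le> dil_profile s"
proof (cases "s = 1")
  case False
  then have "ln (1 - s) \<le> 0" using assms by simp
  then show ?thesis using assms by (simp add: dil_profile_def mult_nonpos_nonpos)
qed (simp add: dil_profile_def)

lemma dil_profile_mult_le_of_le: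
  assumes "r \<le> s" "s \<le> 1"
  shows "(1 - s) * dil_profile r \<le> (1 - r) * dil_profile s"
proof (cases "s = 1")
  case False
  then have "ln (1 - s) \<le> ln (1 - r)" using assms by simp
  then have "(1 - r) * (1 - s) * - ln (1 - r) \<le> (1 - r) * (1 - s) * - ln (1 - s)"
    using assms by (intro mult_left_mono) auto
  then show ?thesis by (simp add: dil_profile_def algebra_simps)
qed (simp add: dil_profile_def)

lemma dil_profile_mult_le_of_ge:
  assumes "0 \<le> s" "s \<le> r" "r \<le> 1"
  shows "s * dil_profile r \<le> r * dil_profile s"
proof (cases "s = 0 \<or> r = 1")
  case True
  then show ?thesis
    using assms dil_profile_nonneg[of s] by (auto simp: dil_profile_def)
next
  case False
  define a c where "a = 1 - r" and "c = 1 - s"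
  have ac: "0 < a" "a \<le> c" "c < 1"
    using assms False by (auto simp: a_def c_def)
  have "a * ln (c / a) \<le> a * (c / a - 1)"
    using ln_le_minus_one[of "c / a"] ac by (intro mult_left_mono) auto
  then have ln_a: "a * ln c - (c - a) \<le> a * ln a"
    using ac by (simp add: ln_div algebra_simps)
  have ln_c: "ln c \<le> c - 1"
    using ln_le_minus_one[of c] ac by simp
  have "c * ln c * (1 - a) = (a * ln c - (c - a)) * (1 - c) - (c - a) * (- ln c - (1 - c))"
    by (simp add: algebra_simps)
  also have "\<dots> \<le> (a * ln c - (c - a)) * (1 - c)"
    using ac ln_c by simp
  also have "\<dots> \<le> a * ln a * (1 - c)"
    using ln_a ac by (intro mult_right_mono) auto
  finally show ?thesis
    by (simp add: dil_profile_def a_def c_def algebra_simps)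
qed

lemma dil_profile_le_scaled:
  assumes "0 \<le> s" "s \<le> 1" "0 \<le> r" "r \<le> 1"
    and "r \<le> b * s" "1 - r \<le> b * (1 - s)"
  shows "dil_profile r \<le> b * dil_profile s"
proof (cases "r \<le> s")
  case True
  show ?thesis
  proof (cases "s = 1")
    case True
    then show ?thesis using assms by (simp add: dil_profile_def)
  next
    case False
    have "(1 - s) * dil_profile r \<le> (1 - r) * dil_profile s"
      using True assms by (intro dil_profile_mult_le_of_le)
    also have "\<dots> \<le> (b * (1 - s)) * dil_profile s"
      using assms dil_profile_nonneg[of s] by (intro mult_right_mono)
    also have "\<dots> = (1 - s) * (b * dil_profile s)"
      by simp
    finally show ?thesis using False assms by simp
  qed
next
  case False
  show ?thesis
  proof (cases "s = 0")
    case True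
    then show ?thesis using assms by (simp add: dil_profile_def)
  next
    case s0: False
    have "s * dil_profile r \<le> r * dil_profile s"
      using False assms by (intro dil_profile_mult_le_of_ge) auto
    also have "\<dots> \<le> (b * s) * dil_profile s"
      using assms dil_profile_nonneg[of s] by (intro mult_right_mono)
    also have "\<dots> = s * (b * dil_profile s)"
      by simp
    finally show ?thesis using s0 assms by simp
  qed
qed

lemma emeasure_density_le_const:
  assumes "h \<in> borel_measurable M" "A \<in> sets M" "AE x in M. h x \<le> c"
  shows "emeasure (density M h) A \<le> c * emeasure M A"
proof -
  have "emeasure (density M h) A = (\<integral>\<^sup>+ x. h x * indicator A x \<partial>M)"
    using assms by (intro emeasure_density) auto
  also have "\<dots> \<le> (\<integral>\<^sup>+ x. c * indicator A x \<partial>M)"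
    using assms(3) by (intro nn_integral_mono_AE) (auto split: split_indicator)
  also have "\<dots> = c * emeasure M A"
    using assms(2) by (rule nn_integral_cmult_indicator)
  finally show ?thesis .
qed

lemma emeasure_density_ge_const:
  assumes "h \<in> borel_measurable M" "A \<in> sets M" "AE x in M. c \<le> h x"
  shows "c * emeasure M A \<le> emeasure (density M h) A"
proof -
  have "c * emeasure M A = (\<integral>\<^sup>+ x. c * indicator A x \<partial>M)"
    using assms(2) by (rule nn_integral_cmult_indicator[symmetric])
  also have "\<dots> \<le> (\<integral>\<^sup>+ x. h x * indicator A x \<partial>M)"
    using assms(3) by (intro nn_integral_mono_AE) (auto split: split_indicator)
  also have "\<dots> = emeasure (density M h) A"
    using assms by (intro emeasure_density[symmetric]) auto
  finally show ?thesis .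
qed

lemma measure_density_comparable:
  fixes h :: "'a \<Rightarrow> real"
  assumes "finite_measure M" "finite_measure (density M (\<lambda>x. ennreal (h x)))"
    and "h \<in> borel_measurable M" "AE x in M. 1 / b \<le> h x \<and> h x \<le> b" "0 < b" "A \<in> sets M"
  shows "measure M A \<le> b * measure (density M (\<lambda>x. ennreal (h x))) A"
    and "measure (density M (\<lambda>x. ennreal (h x))) A \<le> b * measure M A"
proof -
  let ?N = "density M (\<lambda>x. ennreal (h x))"
  interpret M: finite_measure M by fact
  interpret N: finite_measure ?N by fact
  have h_meas: "(\<lambda>x. ennreal (h x)) \<in> borel_measurable M"
    using assms(3) by (rule measurable_compose[OF _ measurable_ennreal])
  have "AE x in M. ennreal (1 / b) \<le> ennreal (h x)"
    using assms(4) by eventually_elim (auto intro: ennreal_leI)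
  then have "ennreal (1 / b) * emeasure M A \<le> emeasure ?N A"
    using h_meas assms(6) by (intro emeasure_density_ge_const)
  then have "1 / b * measure M A \<le> measure ?N A"
    using assms(5) by (simp add: M.emeasure_eq_measure N.emeasure_eq_measure ennreal_mult[symmetric])
  then show "measure M A \<le> b * measure ?N A"
    using assms(5) by (simp add: divide_le_eq mult.commute)
  have "AE x in M. ennreal (h x) \<le> ennreal b"
    using assms(4) by eventually_elim (auto intro: ennreal_leI)
  then have "emeasure ?N A \<le> ennreal b * emeasure M A"
    using h_meas assms(6) by (intro emeasure_density_le_const)
  then show "measure ?N A \<le> b * measure M A"
    using assms(5) by (simp add: M.emeasure_eq_measure N.emeasure_eq_measure ennreal_mult[symmetric])
qed

lemma prob_space_density_set_integral:
  fixes h :: "'a \<Rightarrow> real"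
  assumes "h \<in> borel_measurable M" "AE x in M. x \<in> \<Omega>" "\<And>x. x \<in> \<Omega> \<Longrightarrow> 0 \<le> h x"
    and "set_integrable M \<Omega> h" "(LINT x:\<Omega>|M. h x) = 1"
  shows "prob_space (density M (\<lambda>x. ennreal (h x)))"
proof (rule prob_spaceI)
  have "emeasure (density M (\<lambda>x. ennreal (h x))) (space M) = (\<integral>\<^sup>+ x. ennreal (h x) \<partial>M)"
    using assms(1) by (subst emeasure_density) (auto intro!: nn_integral_cong)
  also have "\<dots> = (\<integral>\<^sup>+ x. ennreal (indicator \<Omega> x * h x) \<partial>M)"
    using assms(2) by (intro nn_integral_cong_AE) auto
  also have "\<dots> = ennreal (LINT x:\<Omega>|M. h x)"
    using assms(3,4) unfolding set_lebesgue_integral_def set_integrable_def real_scaleR_def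
    by (intro nn_integral_eq_integral AE_I2) (auto simp: indicator_def)
  finally show "emeasure (density M (\<lambda>x. ennreal (h x))) (space (density M (\<lambda>x. ennreal (h x)))) = 1"
    using assms(5) by simp
qed

lemma dil_lower_ge_of_comparable:
  assumes "finite_measure M" "finite_measure N" "sets N = sets M" "1 \<le> b"
    and "\<And>A. A \<in> sets M \<Longrightarrow> measure M A \<le> b * measure N A"
    and "\<And>A. A \<in> sets M \<Longrightarrow> measure N A \<le> b * measure M A"
    and "K \<in> sets M" "ereal c \<le> dil_lower M K" "0 \<le> c"
  shows "ereal (c / b) \<le> dil_lower N K"
proof -
  interpret M: finite_measure M by fact
  interpret N: finite_measure N by fact
  \<comment> \<open>\<open>dil_set K \<epsilon>\<close> is not known to be Borel; where it is not, both measures vanish on it and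
    the quotients are negative, so they only compare through the factor \<open>b\<close> instead of \<open>1/b\<close>.\<close>
  define \<phi> where "\<phi> x = min (ereal (1 / b) * x) (ereal b * x)" for x
  define q where "q L \<epsilon> = (measure L (dil_set K \<epsilon>) - measure L K) / \<epsilon>" for L \<epsilon>
  have \<phi>_mono: "mono \<phi>"
    unfolding \<phi>_def by (intro monoI min.mono ereal_mult_left_mono) (use assms(4) in auto)
  have \<phi>_cont: "continuous_on UNIV \<phi>"
    unfolding \<phi>_def by (intro continuous_on_min continuous_on_cmult_ereal continuous_on_id) auto
  have q_compare: "\<phi> (ereal (q M \<epsilon>)) \<le> ereal (q N \<epsilon>)" if "0 < \<epsilon>" for \<epsilon>
  proof -
    define D where "D = dil_set K \<epsilon>"
    have "min (q M \<epsilon> / b) (b * q M \<epsilon>) \<le> q N \<epsilon>"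
    proof (cases "D \<in> sets M")
      case True
      have "K \<subseteq> D" by (auto simp: D_def dil_set_def)
      then have "q L \<epsilon> = measure L (D - K) / \<epsilon>" if "finite_measure L" "sets L = sets M" for L
        using finite_measure.finite_measure_Diff[OF that(1)] True assms(7) that(2)
        by (simp add: q_def D_def)
      then have "q M \<epsilon> / b \<le> q N \<epsilon>"
        using assms(1-5,7) True \<open>0 < \<epsilon>\<close>
        by (simp add: divide_right_mono pos_divide_le_eq mult.commute)
      then show ?thesis by simp
    next
      case False
      then have "b * q M \<epsilon> \<le> q N \<epsilon>"
        using assms(3,6,7) \<open>0 < \<epsilon>\<close>
        by (simp add: q_def D_def measure_notin_sets divide_right_mono)
      then show ?thesis by simp
    qed
    then show ?thesis by (auto simp: \<phi>_def min_def)
  qed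
  have "c \<le> c * b"
    using assms(4,9) mult_left_mono[of 1 b c] by simp
  then have "c / b \<le> b * c"
    using assms(4) by (simp add: divide_le_eq mult.commute order_trans)
  then have "ereal (c / b) = \<phi> (ereal c)"
    by (simp add: \<phi>_def min_def)
  also have "\<dots> \<le> \<phi> (dil_lower M K)"
    using \<phi>_mono assms(8) by (rule monoD)
  also have "\<dots> = Liminf (at_right 0) (\<lambda>\<epsilon>. \<phi> (ereal (q M \<epsilon>)))"
    unfolding dil_lower_def q_def
    by (rule Liminf_compose_continuous_mono[symmetric, OF \<phi>_cont \<phi>_mono]) simp
  also have "\<dots> \<le> Liminf (at_right 0) (\<lambda>\<epsilon>. ereal (q N \<epsilon>))"
    by (intro Liminf_mono eventually_mono[OF eventually_at_right_less] q_compare)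
  also have "\<dots> = dil_lower N K"
    by (simp add: dil_lower_def q_def)
  finally show ?thesis .
qed

lemma dilation_ineq_of_comparable:
  assumes "prob_space M" "prob_space N" "sets M = sets borel" "sets N = sets borel"
    and "1 \<le> b" "0 \<le> \<kappa>"
    and "\<And>A. A \<in> sets borel \<Longrightarrow> measure M A \<le> b * measure N A"
    and "\<And>A. A \<in> sets borel \<Longrightarrow> measure N A \<le> b * measure M A"
    and "dilation_ineq M \<Omega> \<kappa>"
  shows "dilation_ineq N \<Omega> (\<kappa> / b\<^sup>2)"
  unfolding dilation_ineq_def
proof
  interpret M: prob_space M by fact
  interpret N: prob_space N by fact
  fix K assume K: "K \<in> sym_convex_sets \<Omega>"
  define s r where "s = measure M K" and "r = measure N K"
  have K_borel: "K \<in> sets borel"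
    using K by (simp add: sym_convex_sets_def)
  have "space N = space M"
    using assms(3,4) by (auto dest: sets_eq_imp_space_eq)
  moreover have "measure M (space M - K) = 1 - s" "measure N (space N - K) = 1 - r"
    using K_borel assms(3,4) by (simp_all add: s_def r_def M.prob_compl N.prob_compl)
  ultimately have "1 - r \<le> b * (1 - s)"
    using assms(8)[of "space M - K"] K_borel assms(3) by auto
  then have "dil_profile r \<le> b * dil_profile s"
    using assms(8)[OF K_borel] by (intro dil_profile_le_scaled) (auto simp: s_def r_def)
  then have "\<kappa> / b\<^sup>2 * dil_profile r \<le> \<kappa> * dil_profile s / b"
    using assms(5,6) by (simp add: power2_eq_square field_simps mult_left_mono)
  moreover have "ereal (\<kappa> * dil_profile s / b) \<le> dil_lower N K"
  proof (rule dil_lower_ge_of_comparable)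
    have "ereal (\<kappa> * dil_profile s) = ereal (- \<kappa> * (1 - s) * ln (1 - s))"
      by (simp add: dil_profile_def algebra_simps)
    also have "\<dots> \<le> dil_lower M K"
      using assms(9) K unfolding dilation_ineq_def s_def by blast
    finally show "ereal (\<kappa> * dil_profile s) \<le> dil_lower M K" .
    show "0 \<le> \<kappa> * dil_profile s"
      using assms(6) by (simp add: dil_profile_nonneg s_def)
  qed (use assms K_borel in \<open>auto simp: M.finite_measure N.finite_measure\<close>)
  ultimately have "ereal (\<kappa> / b\<^sup>2 * dil_profile r) \<le> dil_lower N K"
    by (meson ereal_less_eq(3) order_trans)
  moreover have "- (\<kappa> / b\<^sup>2) * (1 - r) * ln (1 - r) = \<kappa> / b\<^sup>2 * dil_profile r"
    by (simp only: dil_profile_def mult_minus_left mult_minus_right mult.assoc)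
  ultimately show "ereal (- (\<kappa> / b\<^sup>2) * (1 - measure N K) * ln (1 - measure N K)) \<le> dil_lower N K"
    unfolding r_def by simp
qed

theorem corollaryc:
  fixes M :: "'a::euclidean_space measure" and \<Omega> :: "'a set"
    and h :: "'a \<Rightarrow> real" and b \<kappa> :: real
  assumes "prob_space M" and "sets M = sets borel"
    and "open \<Omega>" and "convex \<Omega>" and "\<Omega> \<noteq> {}" and "uminus ` \<Omega> = \<Omega>"
    and "measure M \<Omega> = 1"
    and "integrable M norm"
    and "h \<in> borel_measurable borel"
    and "b > 1"
    and "\<forall>x\<in>\<Omega>. 1 / b \<le> h x \<and> h x \<le> b"
    and "(LINT x:\<Omega>|M. h x) = 1"
    and "\<kappa> > 0"
    and "dilation_ineq M \<Omega> \<kappa>"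
  shows "dilation_ineq (density M (\<lambda>x. ennreal (h x))) \<Omega> (\<kappa> / b\<^sup>2)"
proof -
  interpret M: prob_space M by fact
  let ?N = "density M (\<lambda>x. ennreal (h x))"
  have h_meas: "h \<in> borel_measurable M"
    using assms(9) measurable_cong_sets[OF assms(2) refl] by blast
  have \<Omega>_meas: "\<Omega> \<in> sets M"
    using assms(2,3) by simp
  have h_bounds: "AE x in M. 1 / b \<le> h x \<and> h x \<le> b"
    using M.AE_prob_1[OF assms(7)] by eventually_elim (use assms(11) in auto)
  have "0 < 1 / b"
    using assms(10) by simp
  then have h_nonneg: "0 \<le> h x" if "x \<in> \<Omega>" for x
    using assms(11) that by (meson less_le_trans less_imp_le)
  have "AE x in M. norm (h x) \<le> b"
    using h_bounds by eventually_elim (use \<open>0 < 1 / b\<close> in \<open>simp only: real_norm_def, arith\<close>)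
  then have "integrable M h"
    using h_meas by (intro M.integrable_const_bound[where B = b])
  then have "set_integrable M \<Omega> h"
    unfolding set_integrable_def using \<Omega>_meas by (intro integrable_mult_indicator)
  then have N_prob: "prob_space ?N"
    using M.AE_prob_1[OF assms(7)] assms(12) h_meas h_nonneg
    by (intro prob_space_density_set_integral)
  note comparable = measure_density_comparable[OF M.finite_measure_axioms
      prob_space.finite_measure[OF N_prob] h_meas h_bounds]
  show ?thesis
  proof (rule dilation_ineq_of_comparable[OF assms(1) N_prob assms(2)])
    fix A :: "'a set" assume "A \<in> sets borel"
    then show "measure M A \<le> b * measure ?N A" "measure ?N A \<le> b * measure M A"
      using comparable assms(2,10) by auto
  qed (use assms(2,10,13,14) in auto)
qed

end
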